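(* Let $\varphi:\mathbb R\to\mathbb C$ satisfy $|\varphi(x)|\le Ce^{-|x|}$ for some $C>0$ and $\int_{\mathbb R}\varphi(x)dx=1$. There exist $\varepsilon>0$ and $K\ge1$ such that for every complex-valued $u\in\mathrm{BMO}(\mathbb R)$ with $\|u\|_*<\varepsilon$ and all $x\in\mathbb R$, $y>0$, $$K^{-1}|(\varphi_y*e^u)(x)|\le|e^{(\varphi_y*u)(x)}|\le K|(\varphi_y*e^u)(x)|.$$
   Context: $u_I=|I|^{-1}\int_Iu$, $\|u\|_*=\sup_I|I|^{-1}\int_I|u-u_I|$ over bounded intervals $I$, $\mathrm{BMO}(\mathbb R)=\{\|u\|_*<\infty\}$. $\varphi_y(x)=y^{-1}\varphi(x/y)$. *)

theory Defs
  imports "HOL-Analysis.Analysis"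
begin

definition interval_avg :: "(real \<Rightarrow> complex) \<Rightarrow> real \<Rightarrow> real \<Rightarrow> complex" where
  "interval_avg u a b = complex_of_real (1 / (b - a)) * (LINT t:{a..b}|lborel. u t)"

definition mean_osc :: "(real \<Rightarrow> complex) \<Rightarrow> real \<Rightarrow> real \<Rightarrow> real" where
  "mean_osc u a b = (1 / (b - a)) * (LINT t:{a..b}|lborel. cmod (u t - interval_avg u a b))"

definition in_BMO :: "(real \<Rightarrow> complex) \<Rightarrow> bool" where
  "in_BMO u \<longleftrightarrow> (\<forall>a b. a < b \<longrightarrow> set_integrable lborel {a..b} u) \<and>
                  bdd_above {mean_osc u a b | a b. a < b}"

definition bmo_norm :: "(real \<Rightarrow> complex) \<Rightarrow> real" where
  "bmo_norm u = Sup {mean_osc u a b | a b. a < b}"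

definition dil :: "(real \<Rightarrow> complex) \<Rightarrow> real \<Rightarrow> real \<Rightarrow> complex" where
  "dil \<phi> y x = complex_of_real (1 / y) * \<phi> (x / y)"

definition conv :: "(real \<Rightarrow> complex) \<Rightarrow> (real \<Rightarrow> complex) \<Rightarrow> real \<Rightarrow> complex" where
  "conv f g x = (LINT t|lborel. f (x - t) * g t)"

end

theory Submission
  imports Defs
begin

text \<open>For small \<open>\<epsilon>\<close>, a John--Nirenberg argument (Calderon--Zygmund stopping on dyadic
  subintervals, run on the truncations \<open>exp (min r N) - 1\<close> so that all suprema are finite)
  shows that \<open>exp |u - u\<^sub>I|\<close> has average at most \<open>1 + 40\<epsilon>\<close> on every interval \<open>I\<close>.
  The averages of \<open>u\<close> over \<open>[x - (n+1)y, x + (n+1)y]\<close> drift by at most \<open>2\<epsilon>\<close> per step, so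
  summing over these annuli against the exponential decay of \<open>\<phi>\<close> gives
  \<open>\<integral> |\<phi>\<^sub>y (x - t)| (exp |u t - a| - 1) dt = O(\<epsilon>)\<close>, where \<open>a\<close> is the average of \<open>u\<close> over
  \<open>[x - y, x + y]\<close>. Finally, with \<open>c = (\<phi>\<^sub>y * u) x\<close>, the identity
  \<open>exp u - exp c = exp c * (exp (u - c) - 1)\<close> and \<open>|exp z - 1| \<le> exp |z| - 1\<close> give
  \<open>|(\<phi>\<^sub>y * exp u) x - exp c| \<le> |exp c| / 2\<close>, hence the claim with \<open>K = 2\<close>.\<close>

section \<open>Dyadic subintervals and a density lemma\<close>

definition dyadic_pt :: "real \<Rightarrow> real \<Rightarrow> nat \<Rightarrow> nat \<Rightarrow> real" where
  "dyadic_pt a b n j = a + real j * ((b - a) / 2 ^ n)"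

definition dyadic_cell :: "real \<Rightarrow> real \<Rightarrow> nat \<Rightarrow> nat \<Rightarrow> real set" where
  "dyadic_cell a b n j = {dyadic_pt a b n j ..< dyadic_pt a b n (Suc j)}"

lemma dyadic_pt_Suc: "dyadic_pt a b n (Suc j) = dyadic_pt a b n j + (b - a) / 2 ^ n"
  unfolding dyadic_pt_def by (simp add: field_simps)

lemma dyadic_cell_sets_lebesgue: "dyadic_cell a b n j \<in> sets lebesgue"
  unfolding dyadic_cell_def by simp

lemma dyadic_cell_lmeasurable: "dyadic_cell a b n j \<in> lmeasurable"
  unfolding dyadic_cell_def
  by (intro bounded_set_imp_lmeasurable) auto

lemma measure_dyadic_cell: "a \<le> b \<Longrightarrow> measure lebesgue (dyadic_cell a b n j) = (b - a) / 2 ^ n"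
  unfolding dyadic_cell_def dyadic_pt_Suc by simp

lemma dyadic_cell_disjoint:
  assumes "a < b" "i \<noteq> j"
  shows "dyadic_cell a b n i \<inter> dyadic_cell a b n j = {}"
proof -
  define h where "h = (b - a) / 2 ^ n"
  have h: "h > 0" using assms unfolding h_def by simp
  have "real i * h < (real j + 1) * h" "real j * h < (real i + 1) * h"
    if "x \<in> dyadic_cell a b n i" "x \<in> dyadic_cell a b n j" for x
    using that unfolding dyadic_cell_def dyadic_pt_def h_def[symmetric] by (auto simp: ring_distribs)
  then have "real i < real j + 1 \<and> real j < real i + 1"
    if "x \<in> dyadic_cell a b n i" "x \<in> dyadic_cell a b n j" for x
    using that h mult_less_cancel_right_pos by meson
  then show ?thesis using assms(2) by fastforce
qed

lemma dyadic_cell_cover: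
  assumes "a < b" "x \<in> {a..<b}"
  obtains j where "j < 2 ^ n" "x \<in> dyadic_cell a b n j"
proof
  define h where "h = (b - a) / 2 ^ n"
  have h: "h > 0" using assms unfolding h_def by simp
  define j where "j = nat \<lfloor>(x - a) / h\<rfloor>"
  have "real j = of_int \<lfloor>(x - a) / h\<rfloor>" unfolding j_def using assms h by simp
  then have j: "real j \<le> (x - a) / h" "(x - a) / h < real j + 1" by linarith+
  have "(x - a) / h < 2 ^ n" using assms h unfolding h_def by (simp add: field_simps)
  then have "real j < 2 ^ n" using j by linarith
  then show "j < 2 ^ n" by (metis of_nat_less_iff of_nat_numeral of_nat_power)
  show "x \<in> dyadic_cell a b n j"
    using j h unfolding dyadic_cell_def dyadic_pt_def h_def[symmetric] by (auto simp: field_simps)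
qed

lemma dyadic_cell_subset: "a < b \<Longrightarrow> j < 2 ^ n \<Longrightarrow> dyadic_cell a b n j \<subseteq> {a..<b}"
proof -
  assume "a < b" "j < 2 ^ n"
  then have "real j + 1 \<le> 2 ^ n"
    by (metis Suc_leI of_nat_Suc of_nat_le_iff of_nat_numeral of_nat_power add.commute)
  then have "real (Suc j) * ((b - a) / 2 ^ n) \<le> 2 ^ n * ((b - a) / 2 ^ n)"
    using \<open>a < b\<close> by (intro mult_right_mono) auto
  then have "real (Suc j) * ((b - a) / 2 ^ n) \<le> b - a" by simp
  then show ?thesis
    using \<open>a < b\<close> unfolding dyadic_cell_def dyadic_pt_def by auto
qed

lemma dyadic_pt_Suc_left: "dyadic_pt a ((a + b) / 2) n j = dyadic_pt a b (Suc n) j"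
  unfolding dyadic_pt_def by (simp add: field_simps)

lemma dyadic_pt_Suc_right:
  "2 ^ n \<le> j \<Longrightarrow> dyadic_pt ((a + b) / 2) b n (j - 2 ^ n) = dyadic_pt a b (Suc n) j"
  unfolding dyadic_pt_def by (simp add: of_nat_diff field_simps)

lemma dyadic_cell_Suc_left: "dyadic_cell a b (Suc n) j = dyadic_cell a ((a + b) / 2) n j"
  unfolding dyadic_cell_def dyadic_pt_Suc_left ..

lemma dyadic_cell_Suc_right:
  assumes "2 ^ n \<le> j"
  shows "dyadic_cell a b (Suc n) j = dyadic_cell ((a + b) / 2) b n (j - 2 ^ n)"
  using assms dyadic_pt_Suc_right[OF assms] dyadic_pt_Suc_right[of n "Suc j"]
  unfolding dyadic_cell_def by (simp add: Suc_diff_le)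

lemma dyadic_cells_meeting_compact_subset_open:
  assumes "compact T" "open U" "T \<subseteq> U" "a < b"
  obtains n where "\<And>j. dyadic_cell a b n j \<inter> T \<noteq> {} \<Longrightarrow> dyadic_cell a b n j \<subseteq> U"
proof -
  obtain d where d: "d > 0" "(\<Union>x\<in>T. ball x d) \<subseteq> U"
    using compact_subset_open_imp_ball_epsilon_subset[OF assms(1-3)] by blast
  obtain n where n: "(b - a) / d < 2 ^ n" using real_arch_pow[of 2] by auto
  have small: "(b - a) / 2 ^ n < d" using n d by (simp add: field_simps)
  have "dyadic_cell a b n j \<subseteq> U" if "x \<in> dyadic_cell a b n j" "x \<in> T" for j x
  proof
    fix z assume "z \<in> dyadic_cell a b n j"
    then have "dist x z < (b - a) / 2 ^ n"
      using that(1) unfolding dyadic_cell_def dyadic_pt_Suc dist_real_def by auto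
    then have "z \<in> ball x d" using small by simp
    then show "z \<in> U" using d(2) \<open>x \<in> T\<close> by blast
  qed
  then show ?thesis using that by blast
qed

lemma measure_compact_le_by_sparse_dyadic:
  assumes ab: "a < b" and T: "compact T" "T \<subseteq> A" and A: "A \<in> sets lebesgue" "A \<subseteq> {a..<b}"
    and U: "open U" "U \<in> lmeasurable" "T \<subseteq> U" and \<theta>: "0 \<le> \<theta>"
    and sparse: "\<And>n j. j < 2 ^ n \<Longrightarrow> measure lebesgue (A \<inter> dyadic_cell a b n j) \<le> \<theta> * ((b - a) / 2 ^ n)"
  shows "measure lebesgue T \<le> \<theta> * measure lebesgue U"
proof -
  obtain n where n: "\<And>j. dyadic_cell a b n j \<inter> T \<noteq> {} \<Longrightarrow> dyadic_cell a b n j \<subseteq> U"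
    using dyadic_cells_meeting_compact_subset_open[OF T(1) U(1) U(3) ab] by blast
  define S where "S = {j. j < 2 ^ n \<and> dyadic_cell a b n j \<inter> T \<noteq> {}}"
  have fin: "finite S" unfolding S_def by simp
  have Tlm: "T \<in> lmeasurable" using lmeasurable_compact[OF T(1)] .
  have T_eq: "(\<Union>j\<in>S. T \<inter> dyadic_cell a b n j) = T"
  proof
    show "T \<subseteq> (\<Union>j\<in>S. T \<inter> dyadic_cell a b n j)"
    proof
      fix x assume "x \<in> T"
      then obtain j where "j < 2 ^ n" "x \<in> dyadic_cell a b n j"
        using dyadic_cell_cover[OF ab] T(2) A(2) by blast
      then show "x \<in> (\<Union>j\<in>S. T \<inter> dyadic_cell a b n j)" using \<open>x \<in> T\<close> unfolding S_def by blast
    qed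
  qed blast
  have "measure lebesgue (\<Union>j\<in>S. T \<inter> dyadic_cell a b n j)
      \<le> (\<Sum>j\<in>S. measure lebesgue (T \<inter> dyadic_cell a b n j))"
    using Tlm dyadic_cell_lmeasurable by (intro measure_UNION_le[OF fin]) (auto intro: fmeasurableD)
  then have "measure lebesgue T \<le> (\<Sum>j\<in>S. measure lebesgue (T \<inter> dyadic_cell a b n j))"
    by (simp only: T_eq)
  also have "\<dots> \<le> (\<Sum>j\<in>S. \<theta> * measure lebesgue (dyadic_cell a b n j))"
  proof (rule sum_mono)
    fix j assume "j \<in> S"
    have "measure lebesgue (T \<inter> dyadic_cell a b n j) \<le> measure lebesgue (A \<inter> dyadic_cell a b n j)"
      using fmeasurable_Int_fmeasurable[OF dyadic_cell_lmeasurable A(1)] T(2)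
        fmeasurableD[OF fmeasurable_Int_fmeasurable[OF Tlm dyadic_cell_sets_lebesgue]]
      by (intro measure_mono_fmeasurable) (auto simp: Int_commute)
    also have "\<dots> \<le> \<theta> * measure lebesgue (dyadic_cell a b n j)"
      using sparse[of j n] \<open>j \<in> S\<close> ab by (simp add: S_def measure_dyadic_cell)
    finally show "measure lebesgue (T \<inter> dyadic_cell a b n j) \<le> \<theta> * measure lebesgue (dyadic_cell a b n j)" .
  qed
  also have "\<dots> = \<theta> * measure lebesgue (\<Union>j\<in>S. dyadic_cell a b n j)"
    using dyadic_cell_disjoint[OF ab] dyadic_cell_lmeasurable
    by (subst measure_finite_Union[OF fin])
       (auto simp: sum_distrib_left disjoint_family_on_def emeasure_eq_measure2)
  also have "\<dots> \<le> \<theta> * measure lebesgue U"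
    using n \<theta> fin dyadic_cell_sets_lebesgue unfolding S_def
    by (intro mult_left_mono measure_mono_fmeasurable[OF _ _ U(2)] sets.finite_UN) auto
  finally show ?thesis .
qed

lemma dyadic_cell_dense:
  assumes ab: "a < b" and A: "A \<in> sets lebesgue" "A \<subseteq> {a..<b}"
    and pos: "0 < measure lebesgue A" and \<theta>: "0 \<le> \<theta>" "\<theta> < 1"
  obtains n j where "j < 2 ^ n" "\<theta> * ((b - a) / 2 ^ n) < measure lebesgue (A \<inter> dyadic_cell a b n j)"
proof -
  have "\<exists>n j. j < 2 ^ n \<and> \<theta> * ((b - a) / 2 ^ n) < measure lebesgue (A \<inter> dyadic_cell a b n j)"
  proof (rule ccontr)
    assume "\<not> ?thesis"
    then have sparse: "\<And>n j. j < 2 ^ n \<Longrightarrow> measure lebesgue (A \<inter> dyadic_cell a b n j) \<le> \<theta> * ((b - a) / 2 ^ n)"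
      by (meson not_le)
    define \<mu> where "\<mu> = measure lebesgue A"
    define e where "e = (1 - \<theta>) * \<mu> / 4"
    have e: "e > 0" using pos \<theta> unfolding e_def \<mu>_def by simp
    have Alm: "A \<in> lmeasurable"
      using A by (meson bounded_Ico bounded_subset bounded_set_imp_lmeasurable)
    obtain U where U: "open U" "A \<subseteq> U" "U - A \<in> lmeasurable" "emeasure lebesgue (U - A) < e"
      using sets_lebesgue_outer_open[OF A(1) e] by blast
    obtain T where T: "closed T" "T \<subseteq> A" "A - T \<in> lmeasurable" "emeasure lebesgue (A - T) < e"
      using sets_lebesgue_inner_closed[OF A(1) e] by blast
    have Ulm: "U \<in> lmeasurable" using fmeasurable.Un[OF Alm U(3)] U(2) by (simp add: Un_absorb1)
    have "measure lebesgue U \<le> \<mu> + measure lebesgue (U - A)"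
      using measure_Un_le[OF fmeasurableD[OF Alm] fmeasurableD[OF U(3)]] U(2)
      by (simp add: \<mu>_def Un_absorb1)
    moreover have "measure lebesgue (U - A) < e"
      using U(3,4) by (simp add: emeasure_eq_measure2 ennreal_less_iff)
    ultimately have mU: "measure lebesgue U \<le> \<mu> + e" by linarith
    have cT: "compact T"
      using T(1,2) A(2) by (meson bounded_Ico bounded_subset compact_eq_bounded_closed order.trans)
    have "measure lebesgue (A - T) = \<mu> - measure lebesgue T"
      unfolding \<mu>_def using lmeasurable_compact[OF cT] T(2) Alm
      by (intro measurable_measure_Diff) (auto intro: fmeasurableD)
    moreover have "measure lebesgue (A - T) < e"
      using T(3,4) by (simp add: emeasure_eq_measure2 ennreal_less_iff)
    ultimately have mT: "\<mu> - e \<le> measure lebesgue T" by linarith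
    have "measure lebesgue T \<le> \<theta> * measure lebesgue U"
      using U(1,2) T(2) Ulm \<theta>(1) sparse
      by (intro measure_compact_le_by_sparse_dyadic[OF ab cT T(2) A]) auto
    also have "\<dots> \<le> \<theta> * (\<mu> + e)" using mU \<theta> by (simp add: mult_left_mono)
    finally have "(1 - \<theta>) * \<mu> \<le> (1 + \<theta>) * e" using mT by (simp add: algebra_simps)
    also have "\<dots> < 2 * e" using \<theta> e by simp
    finally show False using e unfolding e_def by (simp add: mult.commute)
  qed
  then show ?thesis using that by blast
qed

section \<open>Exponential integrability under small mean oscillation\<close>

lemma set_integrable_bounded_Icc:
  fixes g :: "real \<Rightarrow> 'b::{banach, second_countable_topology}"
  assumes "A \<in> sets lborel" "A \<subseteq> {p..q}" "g \<in> borel_measurable lborel" "\<And>t. norm (g t) \<le> B"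
  shows "set_integrable lborel A g"
proof -
  have "emeasure lborel A \<le> emeasure lborel {p..q}" using assms by (intro emeasure_mono) auto
  also have "\<dots> < \<infinity>" by (cases "p \<le> q") auto
  finally show ?thesis unfolding set_integrable_def
    by (intro integrableI_bounded_set_indicator[where B=B]) (use assms in auto)
qed

lemma set_integral_mono_set_nonneg:
  fixes g :: "real \<Rightarrow> real"
  assumes "A \<subseteq> B" "A \<in> sets lborel" "set_integrable lborel B g" "\<And>t. 0 \<le> g t"
  shows "(LINT t:A|lborel. g t) \<le> (LINT t:B|lborel. g t)"
proof -
  have "set_integrable lborel A g" by (rule set_integrable_subset[OF assms(3,2,1)])
  then show ?thesis using assms unfolding set_lebesgue_integral_def set_integrable_def
    by (intro integral_mono) (auto simp: indicator_def)
qed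

lemma set_integral_Ico_eq_Icc:
  fixes g :: "real \<Rightarrow> 'b::{banach, second_countable_topology}"
  assumes "g \<in> borel_measurable lborel"
  shows "(LINT t:{p..<q}|lborel. g t) = (LINT t:{p..q}|lborel. g t)"
proof (rule set_integral_cong_set)
  show "set_borel_measurable lborel {p..<q} g" "set_borel_measurable lborel {p..q} g"
    unfolding set_borel_measurable_def using assms by measurable
  show "AE x in lborel. (x \<in> {p..q}) = (x \<in> {p..<q})"
    using AE_lborel_singleton[of q] by eventually_elim auto
qed

definition trunc_expm1 :: "nat \<Rightarrow> real \<Rightarrow> real" where
  "trunc_expm1 N r = exp (min r (real N)) - 1"

lemma trunc_expm1_nonneg: "0 \<le> r \<Longrightarrow> 0 \<le> trunc_expm1 N r"
  unfolding trunc_expm1_def by simp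

lemma abs_trunc_expm1_le: "\<bar>trunc_expm1 N r\<bar> \<le> exp (real N)"
proof -
  have "exp (min r (real N)) \<le> exp (real N)" "1 \<le> exp (real N)" by simp_all
  then show ?thesis unfolding trunc_expm1_def using exp_gt_zero[of "min r (real N)"] by linarith
qed

lemma trunc_expm1_mono: "r \<le> r' \<Longrightarrow> trunc_expm1 N r \<le> trunc_expm1 N r'"
  unfolding trunc_expm1_def by simp

lemma trunc_expm1_le_expm1: "trunc_expm1 N r \<le> exp r - 1"
  unfolding trunc_expm1_def by simp

lemma trunc_expm1_add_le: "0 \<le> d \<Longrightarrow> trunc_expm1 N (r + d) \<le> exp d * trunc_expm1 N r + exp d - 1"
proof -
  assume "0 \<le> d"
  then have "min (r + d) (real N) \<le> d + min r (real N)" by linarith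
  then have "exp (min (r + d) (real N)) \<le> exp d * exp (min r (real N))"
    by (simp flip: exp_add)
  then show ?thesis unfolding trunc_expm1_def by (simp add: algebra_simps)
qed

lemma borel_measurable_trunc_expm1 [measurable]: "trunc_expm1 N \<in> borel_measurable borel"
  unfolding trunc_expm1_def by measurable

lemma set_integral_exp_le_if_trunc_le:
  fixes f :: "'a \<Rightarrow> real"
  assumes A: "A \<in> sets M" "emeasure M A \<noteq> \<infinity>" and f: "f \<in> borel_measurable M"
    and trunc_le: "\<And>N. (LINT t:A|M. trunc_expm1 N (f t)) \<le> B"
  shows "set_integrable M A (\<lambda>t. exp (f t))" and "(LINT t:A|M. exp (f t)) \<le> B + measure M A"
proof -
  define F where "F N t = indicator A t * (trunc_expm1 N (f t) + 1)" for N t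
  define G where "G t = indicator A t * exp (f t)" for t
  have trunc_int: "set_integrable M A (\<lambda>t. trunc_expm1 N (f t))" for N
    unfolding set_integrable_def using A f abs_trunc_expm1_le
    by (intro integrableI_bounded_set_indicator[where B="exp (real N)"]) (auto simp: less_top)
  have one_int: "set_integrable M A (\<lambda>t. 1 :: real)"
    unfolding set_integrable_def using A by (simp add: less_top)
  have F_int: "integrable M (F N)" for N
    using set_integral_add(1)[OF trunc_int one_int] unfolding set_integrable_def F_def by simp
  have F_le: "integral\<^sup>L M (F N) \<le> B + measure M A" for N
  proof -
    have "integral\<^sup>L M (F N) = (LINT t:A|M. trunc_expm1 N (f t) + 1)"
      unfolding F_def set_lebesgue_integral_def by simp
    also have "\<dots> = (LINT t:A|M. trunc_expm1 N (f t)) + measure M A"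
      using A by (simp add: set_integral_add(2)[OF trunc_int one_int] set_integral_const)
    finally show ?thesis using trunc_le[of N] by simp
  qed
  have F_Suc: "F N t \<le> F (Suc N) t" for N t
    by (simp add: F_def indicator_def trunc_expm1_def min.coboundedI2)
  have "incseq (\<lambda>N. integral\<^sup>L M (F N))"
    by (intro incseq_SucI integral_mono F_int F_Suc)
  then obtain L where L: "(\<lambda>N. integral\<^sup>L M (F N)) \<longlonglongrightarrow> L"
    using incseq_convergent F_le by metis
  have F_lim: "(\<lambda>N. F N t) \<longlonglongrightarrow> G t" for t
  proof (rule tendsto_eventually)
    obtain N0 :: nat where N0: "f t \<le> real N0" using real_arch_simple by blast
    have "min (f t) (real N) = f t" if "N0 \<le> N" for N
      using that by (intro min_absorb1 order.trans[OF N0]) simp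
    then show "\<forall>\<^sub>F N in sequentially. F N t = G t"
      unfolding eventually_sequentially F_def G_def trunc_expm1_def by auto
  qed
  have "AE t in M. mono (\<lambda>N. F N t)" by (intro AE_I2 incseq_SucI F_Suc)
  moreover have "AE t in M. 0 \<le> F N t" for N by (intro AE_I2) (simp add: F_def trunc_expm1_def)
  moreover have "G \<in> borel_measurable M" unfolding G_def using A f by measurable
  ultimately have "integrable M G" "integral\<^sup>L M G = L"
    using integral_monotone_convergence_nonneg[OF F_int _ _ AE_I2[OF F_lim] L] by blast+
  moreover have "L \<le> B + measure M A" using L F_le by (intro LIMSEQ_le_const2) auto
  ultimately show "set_integrable M A (\<lambda>t. exp (f t))" "(LINT t:A|M. exp (f t)) \<le> B + measure M A"
    unfolding set_integrable_def set_lebesgue_integral_def G_def by simp_all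
qed

locale small_mean_osc =
  fixes u :: "real \<Rightarrow> complex" and \<epsilon> :: real
  assumes locally_integrable: "\<And>p q. p < q \<Longrightarrow> set_integrable lborel {p..q} u"
    and mean_osc_le: "\<And>p q. p < q \<Longrightarrow> mean_osc u p q \<le> \<epsilon>"
    and eps_pos: "0 < \<epsilon>" and eps_le: "\<epsilon> \<le> 1/16"
begin

lemma borel_measurable_u [measurable]: "u \<in> borel_measurable lborel"
proof -
  have m: "(\<lambda>x. indicator {-real n - 1..real n + 1} x *\<^sub>R u x) \<in> borel_measurable lborel" for n :: nat
    using locally_integrable[of "-real n - 1" "real n + 1"] unfolding set_integrable_def
    by (auto intro: borel_measurable_integrable)
  show ?thesis
  proof (rule borel_measurable_LIMSEQ_metric[OF m])
    fix x :: real
    obtain N :: nat where "\<bar>x\<bar> \<le> real N" using real_arch_simple by blast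
    then have "\<forall>n\<ge>N. indicator {-real n - 1..real n + 1} x *\<^sub>R u x = u x"
      by (auto simp: indicator_def)
    then show "(\<lambda>n. indicator {-real n - 1..real n + 1} x *\<^sub>R u x) \<longlonglongrightarrow> u x"
      by (intro tendsto_eventually) (auto simp: eventually_sequentially)
  qed
qed

lemma set_integrable_dist:
  assumes "p < q" "A \<in> sets lborel" "A \<subseteq> {p..q}"
  shows "set_integrable lborel A (\<lambda>t. cmod (u t - c))"
proof -
  have "set_integrable lborel {p..q} (\<lambda>t. u t - c)"
    using assms by (intro set_integral_diff(1) locally_integrable set_integrable_bounded_Icc[where B="cmod c"]) auto
  then show ?thesis using assms by (intro set_integrable_subset[OF set_integrable_norm]) auto
qed

lemma set_integrable_trunc:
  "A \<in> sets lborel \<Longrightarrow> A \<subseteq> {p..q} \<Longrightarrow> set_integrable lborel A (\<lambda>t. trunc_expm1 N (cmod (u t - c)))"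
  by (rule set_integrable_bounded_Icc[where B="exp (real N)"]) (auto simp: abs_trunc_expm1_le)

lemma norm_interval_avg_diff_le:
  assumes pq: "p < q"
  shows "cmod (interval_avg u p q - c) \<le> (LINT t:{p..q}|lborel. cmod (u t - c)) / (q - p)"
proof -
  have ci: "set_integrable lborel {p..q} (\<lambda>_. c)"
    by (rule set_integrable_bounded_Icc[where B="cmod c"]) auto
  have "(LINT t:{p..q}|lborel. u t - c) = (LINT t:{p..q}|lborel. u t) - (q - p) *\<^sub>R c"
    using pq by (simp add: set_integral_diff(2)[OF locally_integrable[OF pq] ci] set_integral_const)
  then have "interval_avg u p q - c = complex_of_real (1 / (q - p)) * (LINT t:{p..q}|lborel. u t - c)"
    unfolding interval_avg_def using pq by (simp add: scaleR_conv_of_real field_simps)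
  then have "cmod (interval_avg u p q - c) = cmod (LINT t:{p..q}|lborel. u t - c) / (q - p)"
    using pq by (simp only: norm_mult norm_of_real) simp
  also have "\<dots> \<le> (LINT t:{p..q}|lborel. cmod (u t - c)) / (q - p)"
    using pq by (intro divide_right_mono set_integral_norm_bound set_integral_diff(1)[OF locally_integrable[OF pq] ci]) auto
  finally show ?thesis .
qed

definition trunc_osc :: "nat \<Rightarrow> real" where
  "trunc_osc N = Sup {(LINT t:{p..q}|lborel. trunc_expm1 N (cmod (u t - interval_avg u p q))) / (q - p) | p q. p < q}"

lemma avg_trunc_le_trunc_osc:
  "p < q \<Longrightarrow> (LINT t:{p..q}|lborel. trunc_expm1 N (cmod (u t - interval_avg u p q))) / (q - p) \<le> trunc_osc N"
  unfolding trunc_osc_def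
proof (rule cSup_upper, blast, rule bdd_aboveI[where M="exp (real N)"], safe)
  fix p' q' :: real assume "p' < q'"
  have "(LINT t:{p'..q'}|lborel. trunc_expm1 N (cmod (u t - interval_avg u p' q')))
      \<le> (LINT t:{p'..q'}|lborel. exp (real N))"
    using abs_trunc_expm1_le \<open>p' < q'\<close>
    by (intro set_integral_mono set_integrable_trunc set_integrable_bounded_Icc[where B="exp (real N)"])
       (auto simp: abs_le_iff)
  then show "(LINT t:{p'..q'}|lborel. trunc_expm1 N (cmod (u t - interval_avg u p' q'))) / (q' - p')
      \<le> exp (real N)"
    using \<open>p' < q'\<close> by (simp add: set_integral_const field_simps)
qed

lemma trunc_osc_nonneg: "0 \<le> trunc_osc N"
proof -
  have "0 \<le> (LINT t:{0..1}|lborel. trunc_expm1 N (cmod (u t - interval_avg u 0 1))) / (1 - 0)"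
    unfolding set_lebesgue_integral_def
    by (intro divide_nonneg_nonneg integral_nonneg) (auto simp: indicator_def trunc_expm1_nonneg)
  then show ?thesis using avg_trunc_le_trunc_osc[of 0 1 N] by linarith
qed

lemma integral_trunc_le_of_close_avg:
  assumes pq: "p < q" and close: "(LINT t:{p..q}|lborel. cmod (u t - c)) \<le> 4 * \<epsilon> * (q - p)"
  shows "(LINT t:{p..q}|lborel. trunc_expm1 N (cmod (u t - c)))
    \<le> (exp (4 * \<epsilon>) * trunc_osc N + exp (4 * \<epsilon>) - 1) * (q - p)"
proof -
  define a where "a = interval_avg u p q"
  define d where "d = cmod (a - c)"
  have "d \<le> (LINT t:{p..q}|lborel. cmod (u t - c)) / (q - p)"
    unfolding d_def a_def by (rule norm_interval_avg_diff_le[OF pq])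
  also have "\<dots> \<le> 4 * \<epsilon>" using close pq by (subst pos_divide_le_eq) auto
  finally have "d \<le> 4 * \<epsilon>" .
  have pointwise: "trunc_expm1 N (cmod (u t - c)) \<le> exp (4 * \<epsilon>) * trunc_expm1 N (cmod (u t - a)) + (exp (4 * \<epsilon>) - 1)"
    for t
  proof -
    have "trunc_expm1 N (cmod (u t - c)) \<le> trunc_expm1 N (cmod (u t - a) + d)"
      using norm_triangle_ineq[of "u t - a" "a - c"] by (intro trunc_expm1_mono) (simp add: d_def)
    also have "\<dots> \<le> exp d * trunc_expm1 N (cmod (u t - a)) + exp d - 1"
      by (rule trunc_expm1_add_le) (simp add: d_def)
    also have "\<dots> \<le> exp (4 * \<epsilon>) * trunc_expm1 N (cmod (u t - a)) + (exp (4 * \<epsilon>) - 1)"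
    proof -
      have "exp d \<le> exp (4 * \<epsilon>)" using \<open>d \<le> 4 * \<epsilon>\<close> by simp
      moreover have "exp d * trunc_expm1 N (cmod (u t - a)) \<le> exp (4 * \<epsilon>) * trunc_expm1 N (cmod (u t - a))"
        using \<open>exp d \<le> exp (4 * \<epsilon>)\<close> by (intro mult_right_mono trunc_expm1_nonneg) auto
      ultimately show ?thesis by linarith
    qed
    finally show ?thesis .
  qed
  have const: "set_integrable lborel {p..q} (\<lambda>t. exp (4 * \<epsilon>) - 1 :: real)"
    by (rule set_integrable_bounded_Icc[where B="\<bar>exp (4 * \<epsilon>) - 1\<bar>"]) auto
  have "(LINT t:{p..q}|lborel. trunc_expm1 N (cmod (u t - c)))
      \<le> (LINT t:{p..q}|lborel. exp (4 * \<epsilon>) * trunc_expm1 N (cmod (u t - a)) + (exp (4 * \<epsilon>) - 1))"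
    using pointwise const
    by (intro set_integral_mono set_integrable_trunc set_integral_add(1) set_integrable_mult_right) auto
  also have "\<dots> = exp (4 * \<epsilon>) * (LINT t:{p..q}|lborel. trunc_expm1 N (cmod (u t - a))) + (exp (4 * \<epsilon>) - 1) * (q - p)"
    using const pq by (subst set_integral_add(2)) (auto intro: set_integrable_trunc simp: set_integral_const)
  also have "(LINT t:{p..q}|lborel. trunc_expm1 N (cmod (u t - a))) \<le> trunc_osc N * (q - p)"
    using avg_trunc_le_trunc_osc[OF pq, of N] pq unfolding a_def by (simp add: field_simps)
  finally show ?thesis by (simp add: algebra_simps)
qed

definition osc_large :: "complex \<Rightarrow> real \<Rightarrow> real \<Rightarrow> bool" where
  "osc_large c p q \<longleftrightarrow> 2 * \<epsilon> * (q - p) < (LINT t:{p..q}|lborel. cmod (u t - c))"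

text \<open>Calderon--Zygmund stopping: the union of the maximal dyadic subintervals of \<open>[p, q)\<close>
  of generation at most \<open>n\<close> on which the mean of \<open>|u - c|\<close> exceeds \<open>2\<epsilon>\<close>.\<close>
fun stopping_set :: "complex \<Rightarrow> nat \<Rightarrow> real \<Rightarrow> real \<Rightarrow> real set" where
  "stopping_set c 0 p q = (if osc_large c p q then {p..<q} else {})"
| "stopping_set c (Suc n) p q = (if osc_large c p q then {p..<q}
     else stopping_set c n p ((p + q) / 2) \<union> stopping_set c n ((p + q) / 2) q)"

lemma stopping_set_subset: "p \<le> q \<Longrightarrow> stopping_set c n p q \<subseteq> {p..<q}"
proof (induction n arbitrary: p q)
  case (Suc n)
  have "stopping_set c n p ((p + q) / 2) \<subseteq> {p..<(p + q) / 2}"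
    "stopping_set c n ((p + q) / 2) q \<subseteq> {(p + q) / 2..<q}"
    using Suc by simp_all
  then show ?case using Suc.prems by auto
qed simp

lemma stopping_set_sets [measurable, simp]: "stopping_set c n p q \<in> sets borel"
  by (induction n arbitrary: p q) auto

lemma stopping_set_Suc_mono: "stopping_set c n p q \<subseteq> stopping_set c (Suc n) p q"
proof (induction n arbitrary: p q)
  case (Suc n)
  show ?case using Suc.IH[of p "(p + q) / 2"] Suc.IH[of "(p + q) / 2" q]
    by (simp only: stopping_set.simps) auto
qed auto

text \<open>The hypothesis on \<open>[p, q]\<close> is inherited by both halves of an interval that is not
  \<open>osc_large\<close>; on a stopped interval it makes its average \<open>4\<epsilon>\<close>-close to \<open>c\<close>.\<close>
lemma stopping_set_estimates:
  assumes "p < q" "(LINT t:{p..q}|lborel. cmod (u t - c)) \<le> 4 * \<epsilon> * (q - p)"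
  shows "2 * \<epsilon> * measure lborel (stopping_set c n p q) \<le> (LINT t:stopping_set c n p q|lborel. cmod (u t - c))
    \<and> (LINT t:stopping_set c n p q|lborel. trunc_expm1 N (cmod (u t - c)))
        \<le> (exp (4 * \<epsilon>) * trunc_osc N + exp (4 * \<epsilon>) - 1) * measure lborel (stopping_set c n p q)"
    (is "?P n p q")
proof -
  let ?Y = "exp (4 * \<epsilon>) * trunc_osc N + exp (4 * \<epsilon>) - 1"
  have large: "2 * \<epsilon> * measure lborel {p..<q} \<le> (LINT t:{p..<q}|lborel. cmod (u t - c))
      \<and> (LINT t:{p..<q}|lborel. trunc_expm1 N (cmod (u t - c))) \<le> ?Y * measure lborel {p..<q}"
    if "p < q" "(LINT t:{p..q}|lborel. cmod (u t - c)) \<le> 4 * \<epsilon> * (q - p)" "osc_large c p q" for p q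
    using that integral_trunc_le_of_close_avg[OF that(1,2), of N]
    by (simp add: set_integral_Ico_eq_Icc osc_large_def)
  show ?thesis using assms
  proof (induction n arbitrary: p q)
    case 0
    then show ?case using large[OF 0] by (cases "osc_large c p q") (simp_all add: set_lebesgue_integral_def)
  next
    case (Suc n)
    show ?case
    proof (cases "osc_large c p q")
      case True
      then show ?thesis using large[OF Suc.prems] by simp
    next
      case False
      define m where "m = (p + q) / 2"
      have pm: "p < m" "m < q" using Suc.prems(1) unfolding m_def by auto
      have total: "(LINT t:{p..q}|lborel. cmod (u t - c)) \<le> 2 * \<epsilon> * (q - p)"
        using False unfolding osc_large_def by simp
      have "(LINT t:{p..m}|lborel. cmod (u t - c)) \<le> (LINT t:{p..q}|lborel. cmod (u t - c))"
        "(LINT t:{m..q}|lborel. cmod (u t - c)) \<le> (LINT t:{p..q}|lborel. cmod (u t - c))"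
        using pm by (auto intro!: set_integral_mono_set_nonneg set_integrable_dist[OF Suc.prems(1)])
      then have "(LINT t:{p..m}|lborel. cmod (u t - c)) \<le> 4 * \<epsilon> * (m - p)"
        "(LINT t:{m..q}|lborel. cmod (u t - c)) \<le> 4 * \<epsilon> * (q - m)"
        using total unfolding m_def by (simp_all add: field_simps)
      then have IH: "?P n p m" "?P n m q" using Suc.IH pm by blast+
      define B1 where "B1 = stopping_set c n p m"
      define B2 where "B2 = stopping_set c n m q"
      have B: "B1 \<subseteq> {p..<m}" "B2 \<subseteq> {m..<q}"
        unfolding B1_def B2_def using pm by (auto intro!: stopping_set_subset)
      then have disj: "B1 \<inter> B2 = {}" by fastforce
      have fin: "emeasure lborel B1 \<noteq> \<infinity>" "emeasure lborel B2 \<noteq> \<infinity>"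
        using emeasure_mono[OF B(1), of lborel] emeasure_mono[OF B(2), of lborel] pm
        by (auto simp: top_unique)
      have "stopping_set c (Suc n) p q = B1 \<union> B2" using False unfolding B1_def B2_def m_def by simp
      moreover have "measure lborel (B1 \<union> B2) = measure lborel B1 + measure lborel B2"
        using fin disj by (intro measure_Union) (auto simp: B1_def B2_def)
      moreover have "(LINT t:B1 \<union> B2|lborel. g t) = (LINT t:B1|lborel. g t) + (LINT t:B2|lborel. g t)"
        if "\<And>A. A \<in> sets lborel \<Longrightarrow> A \<subseteq> {p..q} \<Longrightarrow> set_integrable lborel A g" for g :: "real \<Rightarrow> real"
        using B pm by (intro set_integral_Un[OF disj] that) (auto simp: B1_def B2_def)
      ultimately show ?thesis
        using IH set_integrable_dist[OF Suc.prems(1)] set_integrable_trunc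
        unfolding B1_def[symmetric] B2_def[symmetric] by (simp add: algebra_simps)
    qed
  qed
qed

lemma dyadic_cell_subset_stopping_set:
  assumes "p < q" "j < 2 ^ n" "osc_large c (dyadic_pt p q n j) (dyadic_pt p q n (Suc j))"
  shows "dyadic_cell p q n j \<subseteq> stopping_set c n p q"
  using assms
proof (induction n arbitrary: p q j)
  case 0
  then show ?case by (simp add: dyadic_cell_def dyadic_pt_def)
next
  case (Suc n)
  define m where "m = (p + q) / 2"
  have pm: "p < m" "m < q" using Suc.prems(1) unfolding m_def by auto
  show ?case
  proof (cases "osc_large c p q")
    case True
    then show ?thesis using dyadic_cell_subset[OF Suc.prems(1,2)] by simp
  next
    case False
    then have split: "stopping_set c (Suc n) p q = stopping_set c n p m \<union> stopping_set c n m q"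
      unfolding m_def by simp
    show ?thesis
    proof (cases "j < 2 ^ n")
      case True
      then show ?thesis
        using Suc.IH[OF pm(1) True] Suc.prems(3)
        unfolding split dyadic_cell_Suc_left dyadic_pt_Suc_left[symmetric] m_def by blast
    next
      case False
      then have j: "2 ^ n \<le> j" "2 ^ n \<le> Suc j" "j - 2 ^ n < 2 ^ n" "Suc (j - 2 ^ n) = Suc j - 2 ^ n"
        using Suc.prems(2) by auto
      then show ?thesis
        using Suc.IH[OF pm(2) j(3)] Suc.prems(3)
        unfolding split dyadic_cell_Suc_right[OF j(1)] dyadic_pt_Suc_right[OF j(1), symmetric]
          dyadic_pt_Suc_right[OF j(2), symmetric] m_def j(4) by blast
    qed
  qed
qed

lemma integral_dist_avg_le:
  "p < q \<Longrightarrow> (LINT t:{p..q}|lborel. cmod (u t - interval_avg u p q)) \<le> \<epsilon> * (q - p)"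
  using mean_osc_le[of p q] by (simp add: mean_osc_def field_simps)

lemma integral_trunc_stopping_union_le:
  assumes ab: "a < b" and c: "c = interval_avg u a b"
  shows "(LINT t:(\<Union>n. stopping_set c n a b)|lborel. trunc_expm1 N (cmod (u t - c)))
    \<le> (exp (4 * \<epsilon>) * trunc_osc N + exp (4 * \<epsilon>) - 1) * ((b - a) / 2)"
proof -
  let ?Y = "exp (4 * \<epsilon>) * trunc_osc N + exp (4 * \<epsilon>) - 1"
  let ?B = "\<lambda>n. stopping_set c n a b"
  have total: "(LINT t:{a..b}|lborel. cmod (u t - c)) \<le> \<epsilon> * (b - a)"
    using integral_dist_avg_le[OF ab] c by simp
  moreover have "\<epsilon> * (b - a) \<le> 4 * \<epsilon> * (b - a)" using eps_pos ab by simp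
  ultimately have est: "2 * \<epsilon> * measure lborel (?B n) \<le> (LINT t:?B n|lborel. cmod (u t - c))
      \<and> (LINT t:?B n|lborel. trunc_expm1 N (cmod (u t - c))) \<le> ?Y * measure lborel (?B n)" for n
    by (intro stopping_set_estimates[OF ab]) simp
  have sub: "?B n \<subseteq> {a..<b}" for n using ab by (intro stopping_set_subset) simp
  then have "?B n \<subseteq> {a..b}" for n by fastforce
  then have sub_union: "(\<Union>n. ?B n) \<subseteq> {a..b}" by blast
  have mono: "(LINT t:?B n|lborel. cmod (u t - c)) \<le> (LINT t:{a..b}|lborel. cmod (u t - c))" for n
    using sub[of n] by (intro set_integral_mono_set_nonneg set_integrable_dist[OF ab]) auto
  have twice: "2 * \<epsilon> * measure lborel (?B n) \<le> \<epsilon> * (b - a)" for n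
    using est[of n] mono[of n] total by linarith
  have "measure lborel (?B n) \<le> (b - a) / 2" for n
    using twice[of n] eps_pos by (simp add: mult.commute)
  moreover have "0 \<le> ?Y"
  proof -
    have "1 \<le> exp (4 * \<epsilon>)" "0 \<le> exp (4 * \<epsilon>) * trunc_osc N"
      using eps_pos trunc_osc_nonneg[of N] by simp_all
    then show ?thesis by linarith
  qed
  ultimately have bound: "(LINT t:?B n|lborel. trunc_expm1 N (cmod (u t - c))) \<le> ?Y * ((b - a) / 2)" for n
    using est[of n] by (meson mult_left_mono order.trans)
  have "(\<lambda>n. LINT t:?B n|lborel. trunc_expm1 N (cmod (u t - c)))
      \<longlonglongrightarrow> (LINT t:(\<Union>n. ?B n)|lborel. trunc_expm1 N (cmod (u t - c)))"
    using set_integrable_trunc[OF _ sub_union]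
    by (intro set_integral_cont_up incseq_SucI stopping_set_Suc_mono) auto
  then show ?thesis using bound by (intro LIMSEQ_le_const2) auto
qed

lemma osc_large_of_dense_set:
  assumes pq: "p < q" and E: "E \<in> sets lborel" "E \<subseteq> {p..q}" "measure lborel E > 2 / 3 * (q - p)"
    and big: "\<And>t. t \<in> E \<Longrightarrow> 3 * \<epsilon> \<le> cmod (u t - c)"
  shows "osc_large c p q"
proof -
  have "emeasure lborel E \<noteq> \<infinity>"
    using emeasure_mono[OF E(2), of lborel] pq by (auto simp: top_unique)
  then have "3 * \<epsilon> * measure lborel E = (LINT t:E|lborel. 3 * \<epsilon>)"
    using E by (simp add: set_integral_const)
  also have "\<dots> \<le> (LINT t:E|lborel. cmod (u t - c))"
    using E big eps_pos
    by (intro set_integral_mono set_integrable_dist[OF pq] set_integrable_bounded_Icc[where B="3 * \<epsilon>"]) auto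
  also have "\<dots> \<le> (LINT t:{p..q}|lborel. cmod (u t - c))"
    using E by (intro set_integral_mono_set_nonneg set_integrable_dist[OF pq]) auto
  moreover have "2 * \<epsilon> * (q - p) < 3 * \<epsilon> * measure lborel E"
    using mult_strict_left_mono[OF E(3), of "3 * \<epsilon>"] eps_pos by simp
  ultimately show ?thesis unfolding osc_large_def by simp
qed

text \<open>If \<open>|u - c| > 3\<epsilon>\<close> on a non-null part of the complement, some dyadic cell is more than
  \<open>2/3\<close> filled by it; that cell is then \<open>osc_large\<close>, hence contained in the stopping set.\<close>
lemma dist_le_off_stopping_union:
  assumes ab: "a < b"
  shows "AE t in lborel. t \<in> {a..b} - (\<Union>n. stopping_set c n a b) \<longrightarrow> cmod (u t - c) \<le> 3 * \<epsilon>"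
proof -
  define A where "A = ({a..<b} - (\<Union>n. stopping_set c n a b)) \<inter> {t. 3 * \<epsilon> < cmod (u t - c)}"
  have A_sets [measurable]: "A \<in> sets lborel" unfolding A_def by measurable
  have "measure lborel A = 0"
  proof (rule ccontr)
    assume "measure lborel A \<noteq> 0"
    then have pos: "0 < measure lebesgue A"
      using measure_completion[OF A_sets] by (simp add: zero_less_measure_iff)
    have "A \<in> sets lebesgue" "A \<subseteq> {a..<b}" unfolding A_def by auto
    then obtain n j where j: "j < 2 ^ n"
      and dense: "2 / 3 * ((b - a) / 2 ^ n) < measure lebesgue (A \<inter> dyadic_cell a b n j)"
      by (rule dyadic_cell_dense[OF ab _ _ pos, of "2/3"]) auto
    define p where "p = dyadic_pt a b n j"
    define q where "q = dyadic_pt a b n (Suc j)"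
    have cell: "dyadic_cell a b n j = {p..<q}" and len: "q - p = (b - a) / 2 ^ n"
      unfolding p_def q_def dyadic_cell_def dyadic_pt_Suc by simp_all
    have "0 < (b - a) / 2 ^ n" using ab by simp
    then have "p < q" using len by linarith
    have "osc_large c p q"
    proof (rule osc_large_of_dense_set[OF \<open>p < q\<close>, of "A \<inter> {p..<q}"])
      show "2 / 3 * (q - p) < measure lborel (A \<inter> {p..<q})"
        using dense unfolding cell len by (simp add: measure_completion)
    qed (auto simp: A_def)
    then have "dyadic_cell a b n j \<subseteq> stopping_set c n a b"
      unfolding p_def q_def by (rule dyadic_cell_subset_stopping_set[OF ab j])
    then have "A \<inter> dyadic_cell a b n j = {}" unfolding A_def by blast
    then have "measure lebesgue (A \<inter> dyadic_cell a b n j) = 0" by simp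
    then show False using dense \<open>0 < (b - a) / 2 ^ n\<close> by linarith
  qed
  moreover have "emeasure lborel A \<le> emeasure lborel {a..<b}"
    by (rule emeasure_mono) (auto simp: A_def)
  then have "emeasure lborel A = ennreal (measure lborel A)"
    using ab by (intro emeasure_eq_ennreal_measure) (auto simp: top_unique)
  ultimately have "A \<in> null_sets lborel" using A_sets by (simp add: null_sets_def)
  then have "AE t in lborel. t \<notin> A" by (rule AE_not_in)
  then show ?thesis using AE_lborel_singleton[of b] by eventually_elim (auto simp: A_def)
qed

lemma integral_trunc_avg_le:
  assumes ab: "a < b"
  shows "(LINT t:{a..b}|lborel. trunc_expm1 N (cmod (u t - interval_avg u a b)))
    \<le> (b - a) * (exp (3 * \<epsilon>) - 1 + (exp (4 * \<epsilon>) * trunc_osc N + exp (4 * \<epsilon>) - 1) / 2)"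
proof -
  define c where "c = interval_avg u a b"
  define B where "B = (\<Union>n. stopping_set c n a b)"
  define g where "g t = trunc_expm1 N (cmod (u t - c))" for t
  have B_sets [measurable]: "B \<in> sets lborel" unfolding B_def by measurable
  have B_sub: "B \<subseteq> {a..b}" unfolding B_def using stopping_set_subset[of a b c] ab by fastforce
  have g_int: "set_integrable lborel S g" if "S \<in> sets lborel" "S \<subseteq> {a..b}" for S
    unfolding g_def using that by (rule set_integrable_trunc)
  have D_sets: "{a..b} - B \<in> sets lborel" by measurable
  have "AE t\<in>{a..b} - B in lborel. g t \<le> exp (3 * \<epsilon>) - 1"
    using dist_le_off_stopping_union[OF ab, of c]
    by eventually_elim
       (auto simp: B_def g_def intro: order.trans[OF trunc_expm1_mono trunc_expm1_le_expm1])
  then have "(LINT t:{a..b} - B|lborel. g t) \<le> (LINT t:{a..b} - B|lborel. exp (3 * \<epsilon>) - 1)"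
    using D_sets
    by (intro set_integral_mono_AE g_int set_integrable_bounded_Icc[where B="\<bar>exp (3 * \<epsilon>) - 1\<bar>" and p=a and q=b])
       auto
  also have "\<dots> = measure lborel ({a..b} - B) * (exp (3 * \<epsilon>) - 1)"
    using D_sets emeasure_mono[of "{a..b} - B" "{a..b}" lborel] ab
    by (subst set_integral_const) (auto simp: top_unique)
  also have "\<dots> \<le> (b - a) * (exp (3 * \<epsilon>) - 1)"
    using ab D_sets eps_pos measure_mono_fmeasurable[of "{a..b} - B" "{a..b}" lborel]
    by (intro mult_right_mono) (auto simp: fmeasurable_def)
  finally have good: "(LINT t:{a..b} - B|lborel. g t) \<le> (b - a) * (exp (3 * \<epsilon>) - 1)" .
  have bad: "(LINT t:B|lborel. g t) \<le> (exp (4 * \<epsilon>) * trunc_osc N + exp (4 * \<epsilon>) - 1) * ((b - a) / 2)"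
    unfolding B_def g_def by (rule integral_trunc_stopping_union_le[OF ab c_def])
  have "(LINT t:{a..b}|lborel. g t) = (LINT t:B|lborel. g t) + (LINT t:{a..b} - B|lborel. g t)"
    using B_sub set_integral_Un[of B "{a..b} - B" lborel g] g_int[OF B_sets B_sub] g_int[OF D_sets]
    by (simp add: Un_absorb1)
  then have "(LINT t:{a..b}|lborel. g t)
      \<le> (b - a) * (exp (3 * \<epsilon>) - 1) + (exp (4 * \<epsilon>) * trunc_osc N + exp (4 * \<epsilon>) - 1) * ((b - a) / 2)"
    using good bad by linarith
  also have "\<dots> = (b - a) * (exp (3 * \<epsilon>) - 1 + (exp (4 * \<epsilon>) * trunc_osc N + exp (4 * \<epsilon>) - 1) / 2)"
    by (simp add: field_simps)
  finally show ?thesis unfolding g_def c_def .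
qed

text \<open>The stopping-time bound is self-improving: it gives roughly
  \<open>trunc_osc N \<le> 10\<epsilon> + 3/4 trunc_osc N\<close>, and truncation makes \<open>trunc_osc N\<close> finite.\<close>
lemma trunc_osc_le: "trunc_osc N \<le> 40 * \<epsilon>"
proof -
  define M where "M = trunc_osc N"
  define K where "K = exp (3 * \<epsilon>) - 1 + (exp (4 * \<epsilon>) * M + exp (4 * \<epsilon>) - 1) / 2"
  have "M \<le> K"
    unfolding M_def trunc_osc_def
  proof (rule cSup_least)
    fix x assume "x \<in> {(LINT t:{p..q}|lborel. trunc_expm1 N (cmod (u t - interval_avg u p q))) / (q - p) | p q. p < q}"
    then obtain p q where "p < q"
      and x: "x = (LINT t:{p..q}|lborel. trunc_expm1 N (cmod (u t - interval_avg u p q))) / (q - p)"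
      by blast
    then show "x \<le> K"
      using integral_trunc_avg_le[OF \<open>p < q\<close>, of N] unfolding K_def M_def
      by (simp add: pos_divide_le_eq mult.commute)
  qed (use zero_less_one in blast)
  have e3: "exp (3 * \<epsilon>) \<le> 1 + 2 * (3 * \<epsilon>)" and e4: "exp (4 * \<epsilon>) \<le> 1 + 2 * (4 * \<epsilon>)"
    using eps_pos eps_le by (intro real_exp_bound_lemma; simp)+
  have "0 \<le> M" unfolding M_def by (rule trunc_osc_nonneg)
  then have "exp (4 * \<epsilon>) * M \<le> (1 + 8 * \<epsilon>) * M" using e4 by (intro mult_right_mono) auto
  moreover have "(1 + 8 * \<epsilon>) * M = M + 8 * (\<epsilon> * M)" by (simp add: algebra_simps)
  moreover have "\<epsilon> * M \<le> M / 16" using mult_right_mono[OF eps_le \<open>0 \<le> M\<close>] by simp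
  moreover have "2 * K = 2 * exp (3 * \<epsilon>) - 2 + exp (4 * \<epsilon>) * M + exp (4 * \<epsilon>) - 1"
    unfolding K_def by (simp add: field_simps)
  ultimately show ?thesis using \<open>M \<le> K\<close> e3 e4 unfolding M_def by linarith
qed

theorem exp_dist_avg_integral_le:
  assumes ab: "a < b"
  shows "set_integrable lborel {a..b} (\<lambda>t. exp (cmod (u t - interval_avg u a b)))"
    and "(LINT t:{a..b}|lborel. exp (cmod (u t - interval_avg u a b))) \<le> (1 + 40 * \<epsilon>) * (b - a)"
proof -
  have trunc_le: "(LINT t:{a..b}|lborel. trunc_expm1 N (cmod (u t - interval_avg u a b))) \<le> 40 * \<epsilon> * (b - a)"
    for N
  proof -
    have "(LINT t:{a..b}|lborel. trunc_expm1 N (cmod (u t - interval_avg u a b))) \<le> trunc_osc N * (b - a)"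
      using avg_trunc_le_trunc_osc[OF ab, of N] ab by (simp add: pos_divide_le_eq)
    also have "\<dots> \<le> 40 * \<epsilon> * (b - a)" using trunc_osc_le[of N] ab by (intro mult_right_mono) auto
    finally show ?thesis .
  qed
  note exp_le = set_integral_exp_le_if_trunc_le[of "{a..b}" lborel, OF _ _ _ trunc_le]
  show "set_integrable lborel {a..b} (\<lambda>t. exp (cmod (u t - interval_avg u a b)))"
    using ab by (intro exp_le(1)) auto
  show "(LINT t:{a..b}|lborel. exp (cmod (u t - interval_avg u a b))) \<le> (1 + 40 * \<epsilon>) * (b - a)"
    using exp_le(2) ab by (simp add: algebra_simps)
qed

end

section \<open>Weighted estimate\<close>

lemma annulus_term_le:
  fixes \<epsilon> :: real and n :: nat
  assumes "0 < \<epsilon>" "\<epsilon> \<le> 1/16"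
  shows "exp (- real n) * (real n + 1) * (exp (2 * real n * \<epsilon>) * (1 + 40 * \<epsilon>) - 1)
    \<le> 640 * \<epsilon> * exp (-3/8) ^ n"
proof -
  define z where "z = 2 * real n * \<epsilon>"
  have "exp z * (1 - z) \<le> exp z * exp (- z)"
    using exp_ge_add_one_self[of "- z"] by (intro mult_left_mono) auto
  then have "exp z - 1 \<le> z * exp z" by (simp add: exp_minus field_simps)
  then have s1: "exp z * (1 + 40 * \<epsilon>) - 1 \<le> \<epsilon> * exp z * (2 * real n + 40)"
    unfolding z_def by (simp add: algebra_simps)
  have "z \<le> real n / 8" using mult_left_mono[OF assms(2), of "real n"] unfolding z_def by simp
  then have ez: "exp z \<le> exp (real n / 8)" by simp
  have n: "real n + 1 \<le> 4 * exp (real n / 4)" "2 * real n + 40 \<le> 160 * exp (real n / 4)"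
    using exp_ge_add_one_self[of "real n / 4"] by linarith+
  have "exp (- real n) * (real n + 1) * (exp z * (1 + 40 * \<epsilon>) - 1)
      \<le> \<epsilon> * exp (- real n) * exp z * ((real n + 1) * (2 * real n + 40))"
    using mult_left_mono[OF s1, of "exp (- real n) * (real n + 1)"] by (simp add: algebra_simps)
  also have "\<dots> \<le> \<epsilon> * exp (- real n) * exp (real n / 8) * ((4 * exp (real n / 4)) * (160 * exp (real n / 4)))"
    using assms ez n by (intro mult_mono) auto
  also have "\<dots> = 640 * \<epsilon> * (exp (- real n) * exp (real n / 8) * exp (real n / 4) * exp (real n / 4))"
    by (simp add: algebra_simps)
  also have "exp (- real n) * exp (real n / 8) * exp (real n / 4) * exp (real n / 4) = exp (real n * (-3/8))"
    by (simp flip: exp_add)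
  also have "\<dots> = exp (-3/8) ^ n" by (rule exp_of_nat_mult)
  finally show ?thesis unfolding z_def .
qed

lemma suminf_exp_neg_three_eighths_le: "(\<Sum>n. exp (-3/8::real) ^ n) \<le> 11/3"
proof -
  have "11/8 \<le> exp (3/8::real)" using exp_ge_add_one_self[of "3/8::real"] by simp
  then have r: "exp (-3/8::real) \<le> 8/11" by (simp add: exp_minus field_simps)
  then have "(\<Sum>n. exp (-3/8::real) ^ n) = 1 / (1 - exp (-3/8))" by (intro suminf_geometric) simp
  also have "\<dots> \<le> 1 / (1 - 8/11)" using r by (intro divide_left_mono) auto
  finally show ?thesis by simp
qed

lemma integral_le_suminf_if_dominated:
  fixes f :: "'a \<Rightarrow> real" and g :: "nat \<Rightarrow> 'a \<Rightarrow> real"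
  assumes f: "f \<in> borel_measurable M" "\<And>t. 0 \<le> f t"
    and g: "\<And>n. integrable M (g n)" "\<And>n t. 0 \<le> g n t"
    and dominated: "\<And>t. \<exists>n. f t \<le> g n t"
    and b: "\<And>n. integral\<^sup>L M (g n) \<le> b n" "summable b"
  shows "integrable M f" and "integral\<^sup>L M f \<le> (\<Sum>n. b n)"
proof -
  have g0: "0 \<le> integral\<^sup>L M (g n)" for n by (intro integral_nonneg_AE AE_I2 g(2))
  have b0: "0 \<le> b n" for n using b(1)[of n] g0[of n] by linarith
  have "ennreal (f t) \<le> (\<Sum>n. ennreal (g n t))" for t
  proof -
    obtain n where "f t \<le> g n t" using dominated by blast
    then have "ennreal (f t) \<le> (\<Sum>n\<in>{n}. ennreal (g n t))" by (simp add: ennreal_leI)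
    also have "\<dots> \<le> (\<Sum>n. ennreal (g n t))" by (rule sum_le_suminf) auto
    finally show ?thesis .
  qed
  then have "(\<integral>\<^sup>+ t. ennreal (f t) \<partial>M) \<le> (\<integral>\<^sup>+ t. (\<Sum>n. ennreal (g n t)) \<partial>M)"
    by (rule nn_integral_mono)
  also have "\<dots> = (\<Sum>n. \<integral>\<^sup>+ t. ennreal (g n t) \<partial>M)"
    using g(1) by (intro nn_integral_suminf) auto
  also have "\<dots> = (\<Sum>n. ennreal (integral\<^sup>L M (g n)))"
    using g by (simp add: nn_integral_eq_integral)
  also have "\<dots> \<le> (\<Sum>n. ennreal (b n))" using b(1) by (intro suminf_le) (auto intro: ennreal_leI)
  also have "\<dots> = ennreal (\<Sum>n. b n)" using b0 b(2) by (rule suminf_ennreal2)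
  finally have nn: "(\<integral>\<^sup>+ t. ennreal (f t) \<partial>M) \<le> ennreal (\<Sum>n. b n)" .
  then show int: "integrable M f"
    using f by (intro integrableI_nonneg) (auto simp: le_less_trans)
  have "ennreal (integral\<^sup>L M f) \<le> ennreal (\<Sum>n. b n)"
    using nn f int by (simp add: nn_integral_eq_integral)
  then show "integral\<^sup>L M f \<le> (\<Sum>n. b n)"
    using b0 b(2) by (simp add: ennreal_le_iff suminf_nonneg)
qed

context small_mean_osc
begin

lemma norm_interval_avg_diff_nested_le:
  assumes "p' \<le> p" "p < q" "q \<le> q'"
  shows "cmod (interval_avg u p q - interval_avg u p' q') \<le> \<epsilon> * (q' - p') / (q - p)"
proof -
  have "p' < q'" using assms by linarith
  have "cmod (interval_avg u p q - interval_avg u p' q')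
      \<le> (LINT t:{p..q}|lborel. cmod (u t - interval_avg u p' q')) / (q - p)"
    using assms by (intro norm_interval_avg_diff_le) simp
  also have "\<dots> \<le> (LINT t:{p'..q'}|lborel. cmod (u t - interval_avg u p' q')) / (q - p)"
    using assms \<open>p' < q'\<close>
    by (intro divide_right_mono set_integral_mono_set_nonneg set_integrable_dist[OF \<open>p' < q'\<close>]) auto
  also have "\<dots> \<le> \<epsilon> * (q' - p') / (q - p)"
    using integral_dist_avg_le[OF \<open>p' < q'\<close>] assms by (intro divide_right_mono) auto
  finally show ?thesis .
qed

lemma norm_centered_avg_diff_le:
  assumes "0 < y"
  shows "cmod (interval_avg u (x - (real n + 1) * y) (x + (real n + 1) * y) - interval_avg u (x - y) (x + y))
    \<le> 2 * real n * \<epsilon>"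
proof (induction n)
  case (Suc n)
  let ?avg = "\<lambda>n::nat. interval_avg u (x - (real n + 1) * y) (x + (real n + 1) * y)"
  define r where "r = (real n + 1) * y"
  have "r = real n * y + y" unfolding r_def by (simp only: distrib_right mult_1_left)
  moreover have "0 \<le> real n * y" using assms by simp
  ultimately have r: "0 < r" "y \<le> r" using assms by linarith+
  have "cmod (interval_avg u (x - r) (x + r) - interval_avg u (x - (r + y)) (x + (r + y)))
      \<le> \<epsilon> * ((x + (r + y)) - (x - (r + y))) / ((x + r) - (x - r))"
    using r assms by (intro norm_interval_avg_diff_nested_le) auto
  also have "\<dots> = \<epsilon> * (r + y) / r" using r by (simp add: field_simps)
  also have "\<dots> \<le> 2 * \<epsilon>"
    using mult_left_mono[OF r(2), of \<epsilon>] eps_pos r by (simp add: pos_divide_le_eq algebra_simps)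
  finally have "cmod (?avg n - ?avg (Suc n)) \<le> 2 * \<epsilon>" unfolding r_def by (simp add: algebra_simps)
  then have "cmod (?avg (Suc n) - ?avg n) \<le> 2 * \<epsilon>" by (simp add: norm_minus_commute)
  from norm_diff_triangle_le[OF this Suc.IH] show ?case by (simp add: algebra_simps)
qed simp

lemma exp_dist_centered_avg_integral_le:
  fixes n :: nat
  assumes y: "0 < y" and a: "a = interval_avg u (x - y) (x + y)"
  defines "I \<equiv> {x - (real n + 1) * y .. x + (real n + 1) * y}"
  shows "set_integrable lborel I (\<lambda>t. exp (cmod (u t - a)) - 1)"
    and "(LINT t:I|lborel. exp (cmod (u t - a)) - 1) \<le> 2 * (real n + 1) * y * (exp (2 * real n * \<epsilon>) * (1 + 40 * \<epsilon>) - 1)"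
proof -
  define p where "p = x - (real n + 1) * y"
  define q where "q = x + (real n + 1) * y"
  have "0 < (real n + 1) * y" using y by simp
  then have pq: "p < q" unfolding p_def q_def by linarith
  have len: "q - p = 2 * (real n + 1) * y" unfolding p_def q_def by (simp add: algebra_simps)
  have I: "I = {p..q}" unfolding I_def p_def q_def ..
  define a' where "a' = interval_avg u p q"
  define e where "e = exp (2 * real n * \<epsilon>)"
  have pointwise: "exp (cmod (u t - a)) \<le> e * exp (cmod (u t - a'))" for t
  proof -
    have "cmod (a' - a) \<le> 2 * real n * \<epsilon>"
      using norm_centered_avg_diff_le[OF y, of x n] unfolding a a'_def p_def q_def .
    then have "cmod (u t - a) \<le> 2 * real n * \<epsilon> + cmod (u t - a')"
      using norm_triangle_ineq[of "u t - a'" "a' - a"] by simp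
    then show ?thesis unfolding e_def by (simp flip: exp_add)
  qed
  note jn = exp_dist_avg_integral_le[OF pq, folded a'_def]
  have int: "set_integrable lborel {p..q} (\<lambda>t. exp (cmod (u t - a)))"
    using pointwise
    by (intro set_integrable_bound[OF set_integrable_mult_right[OF jn(1), of e]])
       (auto simp: set_borel_measurable_def e_def)
  have one: "set_integrable lborel {p..q} (\<lambda>t. 1 :: real)"
    by (rule set_integrable_bounded_Icc[where B=1]) auto
  show "set_integrable lborel I (\<lambda>t. exp (cmod (u t - a)) - 1)"
    unfolding I by (rule set_integral_diff(1)[OF int one])
  have "(LINT t:{p..q}|lborel. exp (cmod (u t - a)) - 1) = (LINT t:{p..q}|lborel. exp (cmod (u t - a))) - (q - p)"
    using pq by (simp add: set_integral_diff(2)[OF int one] set_integral_const)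
  also have "(LINT t:{p..q}|lborel. exp (cmod (u t - a))) \<le> e * (LINT t:{p..q}|lborel. exp (cmod (u t - a')))"
    using pointwise by (simp flip: set_integral_mult_right add: set_integral_mono[OF int] jn(1))
  also have "\<dots> \<le> e * ((1 + 40 * \<epsilon>) * (q - p))"
    using jn(2) by (intro mult_left_mono) (auto simp: e_def)
  finally show "(LINT t:I|lborel. exp (cmod (u t - a)) - 1) \<le> 2 * (real n + 1) * y * (e * (1 + 40 * \<epsilon>) - 1)"
    unfolding I len by (simp add: algebra_simps)
qed


lemma annulus_contribution_le:
  assumes y: "0 < y" and C: "0 \<le> C" and a: "a = interval_avg u (x - y) (x + y)"
  shows "C / y * exp (- real n) * (LINT t:{x - (real n + 1) * y .. x + (real n + 1) * y}|lborel. exp (cmod (u t - a)) - 1)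
    \<le> 1280 * C * \<epsilon> * exp (-3/8) ^ n"
proof -
  have "C / y * exp (- real n) * (LINT t:{x - (real n + 1) * y .. x + (real n + 1) * y}|lborel. exp (cmod (u t - a)) - 1)
      \<le> C / y * exp (- real n) * (2 * (real n + 1) * y * (exp (2 * real n * \<epsilon>) * (1 + 40 * \<epsilon>) - 1))"
    using exp_dist_centered_avg_integral_le(2)[OF y a, of n] C y by (intro mult_left_mono) auto
  also have "\<dots> = 2 * C * (exp (- real n) * (real n + 1) * (exp (2 * real n * \<epsilon>) * (1 + 40 * \<epsilon>) - 1))"
    using y by (simp add: field_simps)
  also have "\<dots> \<le> 2 * C * (640 * \<epsilon> * exp (-3/8) ^ n)"
    using C eps_pos eps_le by (intro mult_left_mono annulus_term_le) auto
  finally show ?thesis by (simp add: algebra_simps)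
qed

lemma weighted_exp_dist_integral_le:
  assumes y: "0 < y" and C: "0 \<le> C" and W: "W \<in> borel_measurable lborel" "\<And>t. 0 \<le> W t"
    and W_le: "\<And>t. W t \<le> C / y * exp (- \<bar>x - t\<bar> / y)"
    and a: "a = interval_avg u (x - y) (x + y)"
  shows "integrable lborel (\<lambda>t. W t * (exp (cmod (u t - a)) - 1))"
    and "(LINT t|lborel. W t * (exp (cmod (u t - a)) - 1)) \<le> 4700 * C * \<epsilon>"
proof -
  define G where "G t = exp (cmod (u t - a)) - 1" for t
  define I where "I n = {x - (real n + 1) * y .. x + (real n + 1) * y}" for n :: nat
  define g where "g n t = C / y * exp (- real n) * (indicator (I n) t * G t)" for n t
  define r where "r = exp (-3/8 :: real)"
  have G0: "0 \<le> G t" for t unfolding G_def by simp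
  have G_meas: "G \<in> borel_measurable lborel" unfolding G_def by measurable
  have g_int: "integrable lborel (g n)" for n
    using exp_dist_centered_avg_integral_le(1)[OF y a, of n]
    unfolding g_def G_def I_def set_integrable_def by simp
  have g0: "0 \<le> g n t" for n t using C y G0 by (simp add: g_def indicator_def)
  have dominated: "\<exists>n. W t * G t \<le> g n t" for t
  proof
    define n where "n = nat \<lfloor>\<bar>x - t\<bar> / y\<rfloor>"
    have "real n = of_int \<lfloor>\<bar>x - t\<bar> / y\<rfloor>" unfolding n_def using y by simp
    then have n: "real n \<le> \<bar>x - t\<bar> / y" "\<bar>x - t\<bar> / y < real n + 1" by linarith+
    then have "\<bar>x - t\<bar> < (real n + 1) * y" using y by (simp add: divide_less_eq)
    then have "t \<in> I n" unfolding I_def by auto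
    have "W t \<le> C / y * exp (- \<bar>x - t\<bar> / y)" by (rule W_le)
    also have "\<dots> \<le> C / y * exp (- real n)" using n(1) C y by (intro mult_left_mono) auto
    finally have "W t * G t \<le> C / y * exp (- real n) * G t" using G0[of t] by (rule mult_right_mono)
    then show "W t * G t \<le> g n t" using \<open>t \<in> I n\<close> unfolding g_def by simp
  qed
  have g_le: "integral\<^sup>L lborel (g n) \<le> 1280 * C * \<epsilon> * r ^ n" for n
    using annulus_contribution_le[OF y C a, of n]
    unfolding g_def G_def I_def r_def set_lebesgue_integral_def by simp
  have r: "0 \<le> r" "norm r < 1" unfolding r_def by simp_all
  then have summable: "summable (\<lambda>n. 1280 * C * \<epsilon> * r ^ n)"
    by (intro summable_mult summable_geometric)
  note bound = integral_le_suminf_if_dominated[OF _ _ g_int g0 dominated g_le summable]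
  show "integrable lborel (\<lambda>t. W t * (exp (cmod (u t - a)) - 1))"
    using bound(1) W G0 G_meas unfolding G_def by simp
  have "(\<Sum>n. 1280 * C * \<epsilon> * r ^ n) = 1280 * C * \<epsilon> * (\<Sum>n. r ^ n)"
    using r by (intro suminf_mult summable_geometric)
  also have "\<dots> \<le> 1280 * C * \<epsilon> * (11/3)"
    using suminf_exp_neg_three_eighths_le C eps_pos unfolding r_def by (intro mult_left_mono) auto
  also have "\<dots> \<le> 4700 * C * \<epsilon>" using C eps_pos by simp
  finally show "(LINT t|lborel. W t * (exp (cmod (u t - a)) - 1)) \<le> 4700 * C * \<epsilon>"
    using bound(2) W G0 G_meas unfolding G_def by simp
qed

end

section \<open>Averages of exponentials\<close>

lemma norm_exp_minus_one_le:
  fixes z :: "'a::{real_normed_algebra_1, banach}"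
  shows "norm (exp z - 1) \<le> exp (norm z) - 1"
proof -
  have g: "(\<lambda>n. z ^ Suc n /\<^sub>R fact (Suc n)) sums (exp z - 1)"
    using exp_converges[of z] by (subst sums_Suc_iff) simp
  have h: "(\<lambda>n. norm z ^ Suc n /\<^sub>R fact (Suc n)) sums (exp (norm z) - 1)"
    using exp_converges[of "norm z"] by (subst sums_Suc_iff) simp
  have "norm (z ^ Suc n /\<^sub>R fact (Suc n)) \<le> norm z ^ Suc n /\<^sub>R fact (Suc n)" for n
    using norm_power_ineq[of z "Suc n"] by (simp add: divide_right_mono)
  then have "norm (\<Sum>n. z ^ Suc n /\<^sub>R fact (Suc n)) \<le> (\<Sum>n. norm z ^ Suc n /\<^sub>R fact (Suc n))"
    using h by (intro norm_suminf_le) (auto simp: sums_iff)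
  then show ?thesis using g h by (simp add: sums_iff)
qed

context
  fixes M :: "'a measure" and k u :: "'a \<Rightarrow> complex" and a :: complex and S :: real
  assumes k: "integrable M k" "(LINT t|M. k t) = 1"
    and u: "u \<in> borel_measurable M"
    and exp_dev: "integrable M (\<lambda>t. cmod (k t) * (exp (cmod (u t - a)) - 1))"
    and exp_dev_le: "(LINT t|M. cmod (k t) * (exp (cmod (u t - a)) - 1)) \<le> S"
begin

lemma integrable_kernel_mult:
  shows "integrable M (\<lambda>t. k t * u t)" and "integrable M (\<lambda>t. k t * exp (u t))"
proof -
  define G where "G t = exp (cmod (u t - a)) - 1" for t
  have k_norm: "integrable M (\<lambda>t. cmod (k t))" using k(1) by simp
  have kG: "integrable M (\<lambda>t. cmod (k t) * G t)" using exp_dev unfolding G_def .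
  have G0: "0 \<le> G t" for t unfolding G_def by simp
  have u_le: "cmod (u t) \<le> cmod (u t - a) + cmod a" for t
    using norm_triangle_ineq[of "u t - a" a] by simp
  have "cmod (u t) \<le> G t + cmod a" for t
    using u_le[of t] exp_ge_add_one_self[of "cmod (u t - a)"] unfolding G_def by linarith
  then have "cmod (k t) * cmod (u t) \<le> cmod (k t) * (G t + cmod a)" for t
    by (intro mult_left_mono) auto
  then have "norm (k t * u t) \<le> norm (cmod (k t) * G t + cmod a * cmod (k t))" for t
    using G0[of t] by (simp add: norm_mult distrib_left mult.commute)
  then show "integrable M (\<lambda>t. k t * u t)"
    using u k(1)
    by (intro Bochner_Integration.integrable_bound[OF Bochner_Integration.integrable_add[OF kG integrable_mult_right[OF k_norm]]] AE_I2)
      auto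
  have "cmod (exp (u t)) \<le> exp (cmod a) * (G t + 1)" for t
  proof -
    have "cmod (exp (u t)) \<le> exp (cmod (u t - a) + cmod a)"
      using norm_exp[of "u t"] u_le[of t] by (meson exp_le_cancel_iff order.trans)
    then show ?thesis unfolding G_def by (simp add: exp_add mult.commute)
  qed
  then have "cmod (k t) * cmod (exp (u t)) \<le> cmod (k t) * (exp (cmod a) * (G t + 1))" for t
    by (intro mult_left_mono) auto
  then have "norm (k t * exp (u t)) \<le> norm (exp (cmod a) * (cmod (k t) * G t + cmod (k t)))" for t
    using G0[of t] by (simp add: norm_mult distrib_left mult.commute mult.left_commute)
  then show "integrable M (\<lambda>t. k t * exp (u t))"
    using u k(1)
    by (intro Bochner_Integration.integrable_bound[OF integrable_mult_right[OF Bochner_Integration.integrable_add[OF kG k_norm]]] AE_I2)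
      auto
qed

lemma norm_center_sub_kernel_integral_le: "cmod (a - (LINT t|M. k t * u t)) \<le> S"
proof -
  have "a - (LINT t|M. k t * u t) = (LINT t|M. k t * a) - (LINT t|M. k t * u t)"
    using k by simp
  also have "\<dots> = (LINT t|M. k t * (a - u t))"
    using k(1) integrable_kernel_mult(1) by (simp add: right_diff_distrib)
  finally have "cmod (a - (LINT t|M. k t * u t)) \<le> (LINT t|M. cmod (k t * (a - u t)))"
    by (simp add: Bochner_Integration.integral_norm_bound)
  also have "\<dots> \<le> (LINT t|M. cmod (k t) * (exp (cmod (u t - a)) - 1))"
  proof (rule Bochner_Integration.integral_mono[OF _ exp_dev])
    show "integrable M (\<lambda>t. cmod (k t * (a - u t)))"
      using k(1) integrable_kernel_mult(1) by (simp add: right_diff_distrib)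
    show "cmod (k t * (a - u t)) \<le> cmod (k t) * (exp (cmod (u t - a)) - 1)" for t
    proof -
      have "cmod (a - u t) \<le> exp (cmod (u t - a)) - 1"
        using exp_ge_add_one_self[of "cmod (u t - a)"] norm_minus_commute[of a "u t"] by linarith
      then show ?thesis using mult_left_mono[OF _ norm_ge_zero[of "k t"]] by (simp add: norm_mult)
    qed
  qed
  also have "\<dots> \<le> S" by (rule exp_dev_le)
  finally show ?thesis .
qed

lemma norm_kernel_integral_exp_sub_exp_le:
  "cmod ((LINT t|M. k t * exp (u t)) - exp (LINT t|M. k t * u t))
    \<le> cmod (exp (LINT t|M. k t * u t)) * (exp S * S + (exp S - 1) * (LINT t|M. cmod (k t)))"
proof -
  define c where "c = (LINT t|M. k t * u t)"
  define G where "G t = exp (cmod (u t - a)) - 1" for t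
  have kG: "integrable M (\<lambda>t. cmod (k t) * G t)" using exp_dev unfolding G_def .
  have k_norm: "integrable M (\<lambda>t. cmod (k t))" using k(1) by simp
  have ac: "cmod (a - c) \<le> S" unfolding c_def by (rule norm_center_sub_kernel_integral_le)
  have pointwise: "cmod (k t * (exp (u t) - exp c)) \<le> cmod (exp c) * (exp S * (cmod (k t) * G t) + (exp S - 1) * cmod (k t))"
    for t
  proof -
    have "cmod (u t - c) \<le> cmod (u t - a) + S"
      using norm_triangle_ineq[of "u t - a" "a - c"] ac by simp
    then have "cmod (exp (u t - c) - 1) \<le> exp (cmod (u t - a) + S) - 1"
      using norm_exp_minus_one_le[of "u t - c"] by (meson diff_right_mono exp_le_cancel_iff order.trans)
    also have "\<dots> = exp S * G t + (exp S - 1)" unfolding G_def by (simp add: exp_add algebra_simps)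
    finally have bound: "cmod (exp (u t - c) - 1) \<le> exp S * G t + (exp S - 1)" .
    have "k t * (exp (u t) - exp c) = exp c * (k t * (exp (u t - c) - 1))"
      by (simp add: exp_diff field_simps)
    then have "cmod (k t * (exp (u t) - exp c)) = cmod (exp c) * (cmod (k t) * cmod (exp (u t - c) - 1))"
      by (simp only: norm_mult)
    also have "\<dots> \<le> cmod (exp c) * (cmod (k t) * (exp S * G t + (exp S - 1)))"
      using bound by (intro mult_left_mono) auto
    finally show ?thesis by (simp add: algebra_simps)
  qed
  have "(LINT t|M. k t * exp (u t)) - exp c = (LINT t|M. k t * (exp (u t) - exp c))"
    using k integrable_kernel_mult(2) by (simp add: right_diff_distrib)
  then have "cmod ((LINT t|M. k t * exp (u t)) - exp c) \<le> (LINT t|M. cmod (k t * (exp (u t) - exp c)))"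
    by (simp add: Bochner_Integration.integral_norm_bound)
  also have "\<dots> \<le> (LINT t|M. cmod (exp c) * (exp S * (cmod (k t) * G t) + (exp S - 1) * cmod (k t)))"
    using pointwise k(1) integrable_kernel_mult(2) kG k_norm
    by (intro Bochner_Integration.integral_mono) (auto simp: right_diff_distrib)
  also have "\<dots> = cmod (exp c) * (exp S * (LINT t|M. cmod (k t) * G t) + (exp S - 1) * (LINT t|M. cmod (k t)))"
    using kG k_norm by simp
  also have "\<dots> \<le> cmod (exp c) * (exp S * S + (exp S - 1) * (LINT t|M. cmod (k t)))"
    using exp_dev_le unfolding G_def by (intro mult_left_mono add_right_mono) auto
  finally show ?thesis unfolding c_def .
qed

end

section \<open>Convolution with dilated kernels\<close>

lemma lborel_integral_reflect_dilate:
  fixes g :: "real \<Rightarrow> 'b::{banach, second_countable_topology}"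
  assumes g: "integrable lborel g" and y: "0 < y"
  shows "integrable lborel (\<lambda>t. g ((x - t) / y))"
    and "(LINT t|lborel. g ((x - t) / y)) = y *\<^sub>R (LINT t|lborel. g t)"
proof -
  have eq: "(\<lambda>t. g (x / y + (- 1 / y) * t)) = (\<lambda>t. g ((x - t) / y))"
    by (simp add: diff_divide_distrib)
  have c: "- 1 / y \<noteq> 0" using y by simp
  show "integrable lborel (\<lambda>t. g ((x - t) / y))"
    using lborel_integrable_real_affine[OF g c, of "x / y"] unfolding eq .
  have "(LINT t|lborel. g t) = (1 / y) *\<^sub>R (LINT t|lborel. g ((x - t) / y))"
    using lborel_integral_real_affine[OF c, of g "x / y"] y unfolding eq by simp
  then show "(LINT t|lborel. g ((x - t) / y)) = y *\<^sub>R (LINT t|lborel. g t)"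
    using y by simp
qed

lemma small_mean_osc_if_bmo_norm_le:
  assumes "in_BMO u" "bmo_norm u \<le> \<epsilon>" "0 < \<epsilon>" "\<epsilon> \<le> 1/16"
  shows "small_mean_osc u \<epsilon>"
proof
  show "set_integrable lborel {p..q} u" if "p < q" for p q
    using assms(1) that unfolding in_BMO_def by blast
  show "mean_osc u p q \<le> \<epsilon>" if "p < q" for p q
  proof -
    have "mean_osc u p q \<le> bmo_norm u"
      unfolding bmo_norm_def using assms(1) that by (intro cSup_upper) (auto simp: in_BMO_def)
    then show ?thesis using assms(2) by linarith
  qed
qed (use assms in auto)

lemma norm_conv_exp_sub_exp_conv_le:
  assumes C: "0 < C" and \<phi>_le: "\<And>x. cmod (\<phi> x) \<le> C * exp (- \<bar>x\<bar>)"
    and \<phi>: "integrable lborel \<phi>" "(LINT x|lborel. \<phi> x) = 1"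
    and u: "small_mean_osc u \<epsilon>" and y: "0 < y"
  defines "S \<equiv> 4700 * C * \<epsilon>"
  shows "cmod (conv (dil \<phi> y) (\<lambda>t. exp (u t)) x - exp (conv (dil \<phi> y) u x))
    \<le> cmod (exp (conv (dil \<phi> y) u x)) * (exp S * S + (exp S - 1) * (LINT t|lborel. cmod (\<phi> t)))"
proof -
  interpret small_mean_osc u \<epsilon> by (rule u)
  define k where "k t = dil \<phi> y (x - t)" for t
  define a where "a = interval_avg u (x - y) (x + y)"
  have k_eq: "k = (\<lambda>t. complex_of_real (1 / y) * \<phi> ((x - t) / y))"
    unfolding k_def dil_def by simp
  have k_norm_eq: "(\<lambda>t. cmod (k t)) = (\<lambda>t. 1 / y * cmod (\<phi> ((x - t) / y)))"
    unfolding k_eq using y by (simp add: norm_divide)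
  have \<phi>_norm: "integrable lborel (\<lambda>t. cmod (\<phi> t))" using \<phi>(1) by simp
  have k: "integrable lborel k" "(LINT t|lborel. k t) = 1"
    unfolding k_eq using lborel_integral_reflect_dilate[OF \<phi>(1) y, of x] \<phi>(2) y
    by (simp_all add: scaleR_conv_of_real)
  have k_norm: "(LINT t|lborel. cmod (k t)) = (LINT t|lborel. cmod (\<phi> t))"
    unfolding k_norm_eq using lborel_integral_reflect_dilate(2)[OF \<phi>_norm y, of x] y by simp
  have k_le: "cmod (k t) \<le> C / y * exp (- \<bar>x - t\<bar> / y)" for t
    using \<phi>_le[of "(x - t) / y"] y unfolding k_norm_eq[THEN fun_cong] by (simp add: field_simps)
  note weighted = weighted_exp_dist_integral_le[OF y less_imp_le[OF C] _ _ k_le a_def]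
  have "cmod ((LINT t|lborel. k t * exp (u t)) - exp (LINT t|lborel. k t * u t))
      \<le> cmod (exp (LINT t|lborel. k t * u t)) * (exp S * S + (exp S - 1) * (LINT t|lborel. cmod (k t)))"
    using k weighted borel_measurable_integrable[OF k(1)] unfolding S_def
    by (intro norm_kernel_integral_exp_sub_exp_le) auto
  then show ?thesis unfolding k_norm unfolding k_def conv_def .
qed

lemma exp_error_le_half:
  fixes S \<Phi> :: real
  assumes "0 \<le> S" "0 \<le> \<Phi>" "4 * (1 + \<Phi>) * S \<le> 1"
  shows "exp S * S + (exp S - 1) * \<Phi> \<le> 1 / 2"
proof -
  have "S \<le> 1 / 4" using assms mult_right_mono[of 1 "1 + \<Phi>" "4 * S"] by linarith
  then have e: "exp S \<le> 1 + 2 * S" using assms(1) by (intro real_exp_bound_lemma) auto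
  have "exp S * S + (exp S - 1) * \<Phi> \<le> (1 + 2 * S) * S + 2 * S * \<Phi>"
    using assms e by (intro add_mono mult_right_mono) auto
  also have "\<dots> \<le> S + S / 2 + 2 * S * \<Phi>"
    using mult_right_mono[OF \<open>S \<le> 1 / 4\<close> assms(1)] by (simp add: algebra_simps)
  also have "\<dots> \<le> 1 / 2" using assms \<open>S \<le> 1 / 4\<close> by (simp add: algebra_simps)
  finally show ?thesis .
qed

lemma conv_exp_comparable:
  assumes "0 < C" "\<And>x. cmod (\<phi> x) \<le> C * exp (- \<bar>x\<bar>)"
    and "integrable lborel \<phi>" "(LINT x|lborel. \<phi> x) = 1"
    and u: "small_mean_osc u \<epsilon>" and y: "0 < y"
    and small: "4 * (1 + (LINT t|lborel. cmod (\<phi> t))) * (4700 * C * \<epsilon>) \<le> 1"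
  shows "cmod (conv (dil \<phi> y) (\<lambda>t. exp (u t)) x) / 2 \<le> cmod (exp (conv (dil \<phi> y) u x))"
    and "cmod (exp (conv (dil \<phi> y) u x)) \<le> 2 * cmod (conv (dil \<phi> y) (\<lambda>t. exp (u t)) x)"
proof -
  let ?E = "conv (dil \<phi> y) (\<lambda>t. exp (u t)) x" and ?c = "conv (dil \<phi> y) u x"
  let ?S = "4700 * C * \<epsilon>" and ?\<Phi> = "LINT t|lborel. cmod (\<phi> t)"
  interpret small_mean_osc u \<epsilon> by (rule u)
  have "0 \<le> ?\<Phi>" by (rule integral_nonneg_AE) simp
  then have half: "exp ?S * ?S + (exp ?S - 1) * ?\<Phi> \<le> 1 / 2"
    using small eps_pos assms(1) by (intro exp_error_le_half) auto
  have "cmod (?E - exp ?c) \<le> cmod (exp ?c) * (exp ?S * ?S + (exp ?S - 1) * ?\<Phi>)"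
    by (rule norm_conv_exp_sub_exp_conv_le[OF assms(1-4) u y])
  also have "\<dots> \<le> cmod (exp ?c) * (1 / 2)" using half by (intro mult_left_mono) auto
  finally have close: "cmod (?E - exp ?c) \<le> cmod (exp ?c) / 2" by simp
  show "cmod ?E / 2 \<le> cmod (exp ?c)"
    using norm_triangle_ineq2[of ?E "exp ?c"] norm_ge_zero[of "exp ?c"] close by linarith
  show "cmod (exp ?c) \<le> 2 * cmod ?E"
    using norm_triangle_ineq2[of "exp ?c" ?E] close by (simp add: norm_minus_commute)
qed

theorem lemma3p4:
  fixes \<phi> :: "real \<Rightarrow> complex" and C :: real
  assumes "C > 0"
    and "\<And>x. cmod (\<phi> x) \<le> C * exp (- \<bar>x\<bar>)"
    and "integrable lborel \<phi>"
    and "(LINT x|lborel. \<phi> x) = 1"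
  shows "\<exists>\<epsilon>>0. \<exists>K\<ge>1. \<forall>u. in_BMO u \<and> bmo_norm u < \<epsilon> \<longrightarrow>
           (\<forall>x. \<forall>y>0.
              cmod (conv (dil \<phi> y) (\<lambda>t. exp (u t)) x) / K \<le> cmod (exp (conv (dil \<phi> y) u x)) \<and>
              cmod (exp (conv (dil \<phi> y) u x)) \<le> K * cmod (conv (dil \<phi> y) (\<lambda>t. exp (u t)) x))"
proof -
  define \<Phi> where "\<Phi> = (LINT t|lborel. cmod (\<phi> t))"
  define P where "P = 4 * (1 + \<Phi>) * (4700 * C)"
  define \<epsilon> where "\<epsilon> = min (1/16) (1 / P)"
  have "0 \<le> \<Phi>" unfolding \<Phi>_def by (rule integral_nonneg_AE) simp
  then have "0 < P" unfolding P_def using assms(1) by simp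
  then have \<epsilon>: "0 < \<epsilon>" "\<epsilon> \<le> 1/16" and "P * \<epsilon> \<le> 1"
    unfolding \<epsilon>_def by (auto simp: min_def field_simps)
  then have small: "4 * (1 + \<Phi>) * (4700 * C * \<epsilon>) \<le> 1" unfolding P_def by (simp add: algebra_simps)
  have "small_mean_osc u \<epsilon>" if "in_BMO u" "bmo_norm u < \<epsilon>" for u
    using that \<epsilon> by (intro small_mean_osc_if_bmo_norm_le) auto
  then show ?thesis
    using conv_exp_comparable[OF assms _ _ small[unfolded \<Phi>_def]] \<epsilon>(1)
    by (intro exI[of _ \<epsilon>] conjI exI[of _ "2::real"]) auto
qed

end
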